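(* Let $p\in(0,1)$ and let $B$ be a $\lfloor 1/p\rfloor$-matching (a set of edges of a graph in which every vertex is incident to at most $\lfloor 1/p\rfloor$ edges). Let $B_p$ be the random subset of $B$ obtained by keeping each edge independently with probability $p$. Then $$\mathbb{E}[\mu(B_p)]\ \ge\ \frac{|B|}{\lfloor 1/p\rfloor}\cdot\frac{1-3p}{3}.$$
   Context: $\mu(X)$ denotes the maximum matching size of the graph formed by the edge set $X$. *)

theory Defs
  imports "HOL-Probability.Probability"
begin

definition is_edge_set :: "'a set set \<Rightarrow> bool" where
  "is_edge_set X \<longleftrightarrow> (\<forall>e\<in>X. card e = 2)"

definition is_b_matching :: "nat \<Rightarrow> 'a set set \<Rightarrow> bool" where
  "is_b_matching b X \<longleftrightarrow> (\<forall>v. card {e\<in>X. v \<in> e} \<le> b)"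

definition is_matching :: "'a set set \<Rightarrow> bool" where
  "is_matching M \<longleftrightarrow> (\<forall>e\<in>M. \<forall>f\<in>M. e \<noteq> f \<longrightarrow> e \<inter> f = {})"

text \<open>Maximum matching size of the graph formed by the edge set X (X finite).\<close>
definition mu :: "'a set set \<Rightarrow> nat" where
  "mu X = Max {card M | M. M \<subseteq> X \<and> is_matching M}"

definition random_subset :: "'b set \<Rightarrow> real \<Rightarrow> 'b set pmf" where
  "random_subset B p = map_pmf (\<lambda>f. {e\<in>B. f e}) (Pi_pmf B False (\<lambda>_. bernoulli_pmf p))"

end

theory Submission imports Defs begin

text \<open>A maximum matching of S has at least the Caro--Wei size
  \<open>\<Sum>e\<in>S. 1 / (1 + d\<^sub>S e)\<close> of the line graph of S, \<open>d\<^sub>S e\<close> being the number of edges of S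
  meeting e. As \<open>1 / (1 + x)\<close> lies above its tangent at \<open>x = c\<close>, this is at least
  \<open>\<Sum>e\<in>S. (1 + 2 c - d\<^sub>S e) / (1 + c)\<^sup>2\<close>, which is linear in the indicators of kept edges and
  of kept pairs of adjacent edges. If every edge of B meets at most D others, taking
  expectations with \<open>c = D p\<close> gives \<open>E \<mu>(B\<^sub>p) \<ge> |B| p / (1 + D p)\<close>. In a k-matching
  \<open>D \<le> 2 (k - 1)\<close>, and \<open>k = \<lfloor>1/p\<rfloor>\<close> turns this into the claimed bound.\<close>

definition adjacent_edges :: "'a set set \<Rightarrow> 'a set \<Rightarrow> 'a set set" where
  "adjacent_edges S e = {f\<in>S. f \<noteq> e \<and> f \<inter> e \<noteq> {}}"

lemma finite_adjacent_edges [simp]: "finite S \<Longrightarrow> finite (adjacent_edges S e)"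
  by (simp add: adjacent_edges_def)

lemma adjacent_edges_mono: "S' \<subseteq> S \<Longrightarrow> adjacent_edges S' e \<subseteq> adjacent_edges S e"
  by (auto simp: adjacent_edges_def)

lemma card_adjacent_edges_le:
  assumes "finite B" "is_b_matching k B" "e \<in> B" "card e = 2"
  shows "card (adjacent_edges B e) \<le> 2 * (k - 1)"
proof -
  obtain u v where e: "e = {u, v}" "u \<noteq> v" using assms(4) by (meson card_2_iff)
  have incident: "card ({f\<in>B. w \<in> f} - {e}) \<le> k - 1" if "w \<in> e" for w
  proof -
    have "card ({f\<in>B. w \<in> f} - {e}) = card {f\<in>B. w \<in> f} - 1"
      using assms(1,3) that by (intro card_Diff_singleton) auto
    thus ?thesis using assms(2) unfolding is_b_matching_def by (metis diff_le_mono)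
  qed
  have "adjacent_edges B e \<subseteq> ({f\<in>B. u \<in> f} - {e}) \<union> ({f\<in>B. v \<in> f} - {e})"
    unfolding adjacent_edges_def e by auto
  hence "card (adjacent_edges B e) \<le> card (({f\<in>B. u \<in> f} - {e}) \<union> ({f\<in>B. v \<in> f} - {e}))"
    using assms(1) by (intro card_mono) auto
  also have "\<dots> \<le> card ({f\<in>B. u \<in> f} - {e}) + card ({f\<in>B. v \<in> f} - {e})"
    by (rule card_Un_le)
  finally show ?thesis using incident[of u] incident[of v] e by simp
qed

lemma finite_matching_sizes: "finite S \<Longrightarrow> finite {card M | M. M \<subseteq> S \<and> is_matching M}"
  by (rule finite_subset[of _ "card ` Pow S"]) auto

lemma card_le_mu: "finite S \<Longrightarrow> M \<subseteq> S \<Longrightarrow> is_matching M \<Longrightarrow> card M \<le> mu S"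
  unfolding mu_def by (rule Max_ge[OF finite_matching_sizes]) auto

lemma ex_matching_card_mu:
  assumes "finite S"
  obtains M where "M \<subseteq> S" "is_matching M" "card M = mu S"
proof -
  have "mu S \<in> {card M | M. M \<subseteq> S \<and> is_matching M}"
    unfolding mu_def by (rule Max_in[OF finite_matching_sizes[OF assms]]) (auto simp: is_matching_def)
  thus ?thesis using that by auto
qed

lemma mu_Diff_closed_neighbourhood:
  assumes "finite S" "e \<in> S"
  shows "mu (S - insert e (adjacent_edges S e)) + 1 \<le> mu S"
proof -
  define S' where "S' = S - insert e (adjacent_edges S e)"
  obtain M where M: "M \<subseteq> S'" "is_matching M" "card M = mu S'"
    using ex_matching_card_mu[of S'] assms(1) unfolding S'_def by blast
  have disjoint: "f \<inter> e = {}" if "f \<in> M" for f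
    using that M(1) unfolding S'_def adjacent_edges_def by auto
  have "is_matching (insert e M)"
    using M(2) disjoint unfolding is_matching_def by blast
  moreover have "insert e M \<subseteq> S" using M(1) assms(2) unfolding S'_def by auto
  ultimately have "card (insert e M) \<le> mu S" using assms(1) by (intro card_le_mu)
  moreover have "finite M" "e \<notin> M"
    using M(1) assms(1) unfolding S'_def by (auto intro: rev_finite_subset)
  hence "card (insert e M) = card M + 1" by simp
  ultimately show ?thesis using M(3) unfolding S'_def by simp
qed

lemma sum_closed_neighbourhood_le_one:
  assumes "finite S" "e \<in> S" and min: "\<And>f. f \<in> S \<Longrightarrow> card (adjacent_edges S e) \<le> card (adjacent_edges S f)"
  shows "(\<Sum>f\<in>insert e (adjacent_edges S e). 1 / (1 + real (card (adjacent_edges S f)))) \<le> 1"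
proof -
  have "(\<Sum>f\<in>insert e (adjacent_edges S e). 1 / (1 + real (card (adjacent_edges S f))))
        \<le> (\<Sum>f\<in>insert e (adjacent_edges S e). 1 / (1 + real (card (adjacent_edges S e))))"
  proof (rule sum_mono)
    fix f assume "f \<in> insert e (adjacent_edges S e)"
    hence "f \<in> S" using assms(2) unfolding adjacent_edges_def by auto
    thus "1 / (1 + real (card (adjacent_edges S f))) \<le> 1 / (1 + real (card (adjacent_edges S e)))"
      using min by (intro divide_left_mono) auto
  qed
  also have "\<dots> = 1"
    using assms(1) by (simp add: adjacent_edges_def field_simps)
  finally show ?thesis .
qed

text \<open>A Caro--Wei bound for the line graph: greedily pick an edge of minimum degree and
  discard its neighbourhood, whose weights sum to at most one.\<close>
theorem caro_wei_mu:
  "finite S \<Longrightarrow> (\<Sum>e\<in>S. 1 / (1 + real (card (adjacent_edges S e)))) \<le> real (mu S)"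
proof (induction "card S" arbitrary: S rule: less_induct)
  case less
  show ?case
  proof (cases "S = {}")
    case False
    obtain e where e: "e \<in> S" "\<And>f. f \<in> S \<Longrightarrow> card (adjacent_edges S e) \<le> card (adjacent_edges S f)"
      using arg_min_if_finite(1)[OF less.prems False, of "\<lambda>e. card (adjacent_edges S e)"]
        arg_min_least[OF less.prems False, of _ "\<lambda>e. card (adjacent_edges S e)"] by metis
    define N where "N = insert e (adjacent_edges S e)"
    have N: "N \<subseteq> S" using e(1) unfolding N_def adjacent_edges_def by auto
    have "card (S - N) < card S"
      using e(1) less.prems unfolding N_def by (intro psubset_card_mono) auto
    hence IH: "(\<Sum>f\<in>S - N. 1 / (1 + real (card (adjacent_edges (S - N) f)))) \<le> real (mu (S - N))"
      using less by simp
    have "(\<Sum>f\<in>S - N. 1 / (1 + real (card (adjacent_edges S f))))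
          \<le> (\<Sum>f\<in>S - N. 1 / (1 + real (card (adjacent_edges (S - N) f))))"
      using less.prems
      by (intro sum_mono divide_left_mono) (auto intro!: card_mono adjacent_edges_mono)
    moreover have "(\<Sum>f\<in>S. 1 / (1 + real (card (adjacent_edges S f)))) =
        (\<Sum>f\<in>S - N. 1 / (1 + real (card (adjacent_edges S f))))
        + (\<Sum>f\<in>N. 1 / (1 + real (card (adjacent_edges S f))))"
      by (rule sum.subset_diff[OF N less.prems])
    moreover have "real (mu (S - N)) + 1 \<le> real (mu S)"
      using mu_Diff_closed_neighbourhood[OF less.prems e(1)] unfolding N_def by linarith
    ultimately show ?thesis
      using IH sum_closed_neighbourhood_le_one[OF less.prems e] unfolding N_def by linarith
  qed simp
qed

lemma inverse_one_plus_ge_tangent: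
  fixes x c :: real
  assumes "0 \<le> x" "0 \<le> c"
  shows "(1 + 2 * c - x) / (1 + c)\<^sup>2 \<le> 1 / (1 + x)"
proof -
  have "(1 + c)\<^sup>2 - (1 + 2 * c - x) * (1 + x) = (x - c)\<^sup>2"
    by (simp add: algebra_simps power2_eq_square)
  hence "(1 + 2 * c - x) * (1 + x) \<le> (1 + c)\<^sup>2"
    by (metis diff_ge_0_iff_ge zero_le_power2)
  thus ?thesis using assms by (simp add: divide_simps)
qed

lemma mu_ge_tangent_sum:
  fixes c :: real
  assumes "finite S" "0 \<le> c"
  shows "(\<Sum>e\<in>S. 1 + 2 * c - real (card (adjacent_edges S e))) / (1 + c)\<^sup>2 \<le> real (mu S)"
proof -
  have "(\<Sum>e\<in>S. 1 + 2 * c - real (card (adjacent_edges S e))) / (1 + c)\<^sup>2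
        = (\<Sum>e\<in>S. (1 + 2 * c - real (card (adjacent_edges S e))) / (1 + c)\<^sup>2)"
    by (rule sum_divide_distrib)
  also have "\<dots> \<le> (\<Sum>e\<in>S. 1 / (1 + real (card (adjacent_edges S e))))"
    using assms(2) by (intro sum_mono inverse_one_plus_ge_tangent) auto
  also have "\<dots> \<le> real (mu S)"
    by (rule caro_wei_mu[OF assms(1)])
  finally show ?thesis .
qed

lemma sum_adjacent_edges_Collect:
  fixes a :: real
  assumes "finite B"
  shows "(\<Sum>e\<in>{e\<in>B. g e}. a - real (card (adjacent_edges {e\<in>B. g e} e)))
       = (\<Sum>e\<in>B. a * of_bool (g e) - (\<Sum>f\<in>adjacent_edges B e. of_bool (g e \<and> g f)))"
proof -
  have adj: "adjacent_edges {e\<in>B. g e} e = adjacent_edges B e \<inter> {f. g f}" for e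
    by (auto simp: adjacent_edges_def)
  have "(\<Sum>e\<in>{e\<in>B. g e}. a - real (card (adjacent_edges {e\<in>B. g e} e)))
       = (\<Sum>e\<in>B. if g e then a - real (card (adjacent_edges {e\<in>B. g e} e)) else 0)"
    using assms by (simp add: sum.inter_filter)
  also have "\<dots> = (\<Sum>e\<in>B. a * of_bool (g e) - (\<Sum>f\<in>adjacent_edges B e. of_bool (g e \<and> g f)))"
    using assms by (intro sum.cong) (auto simp: adj)
  finally show ?thesis .
qed

lemma finite_set_Pi_bernoulli: "finite A \<Longrightarrow> finite (set_pmf (Pi_pmf A d (\<lambda>_. bernoulli_pmf p)))"
  by (simp add: set_Pi_pmf finite_PiE_dflt)

lemma expectation_Pi_bernoulli_all:
  assumes "finite A" "T \<subseteq> A" "0 \<le> p" "p \<le> 1"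
  shows "measure_pmf.expectation (Pi_pmf A False (\<lambda>_. bernoulli_pmf p))
           (\<lambda>g. of_bool (\<forall>x\<in>T. g x) :: real) = p ^ card T"
proof -
  have fin: "finite T" using assms(1,2) by (rule rev_finite_subset)
  have "of_bool (\<forall>x\<in>T. g x) = (\<Prod>x\<in>T. of_bool (g x) :: real)" for g
    using fin by (induction T rule: finite_induct) auto
  also have "(\<Prod>x\<in>T. of_bool (g x) :: real) = (\<Prod>x\<in>A. if x \<in> T then of_bool (g x) else 1)" for g
    using prod.inter_restrict[OF assms(1)] assms(2) by (metis Int_absorb1)
  finally have "measure_pmf.expectation (Pi_pmf A False (\<lambda>_. bernoulli_pmf p))
           (\<lambda>g. of_bool (\<forall>x\<in>T. g x) :: real)
      = measure_pmf.expectation (Pi_pmf A False (\<lambda>_. bernoulli_pmf p))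
           (\<lambda>g. \<Prod>x\<in>A. (\<lambda>x v. if x \<in> T then of_bool v else 1) x (g x))"
    by simp
  also have "\<dots> = (\<Prod>x\<in>A. measure_pmf.expectation (bernoulli_pmf p) (\<lambda>v. if x \<in> T then of_bool v else 1))"
    by (rule expectation_prod_Pi_pmf[OF assms(1)]) (auto intro!: integrable_measure_pmf_finite)
  also have "\<dots> = (\<Prod>x\<in>A. if x \<in> T then p else 1)"
    using assms(3,4) by (intro prod.cong) auto
  also have "\<dots> = p ^ card T"
    using prod.inter_restrict[OF assms(1), of "\<lambda>_. p" T] assms(2) by (simp add: Int_absorb1)
  finally show ?thesis .
qed

lemma expectation_sum_adjacent_pairs:
  fixes a :: real
  assumes "finite B" "0 \<le> p" "p \<le> 1"
  shows "measure_pmf.expectation (Pi_pmf B False (\<lambda>_. bernoulli_pmf p))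
           (\<lambda>g. \<Sum>e\<in>B. a * of_bool (g e) - (\<Sum>f\<in>adjacent_edges B e. of_bool (g e \<and> g f)))
       = (\<Sum>e\<in>B. a * p - real (card (adjacent_edges B e)) * p\<^sup>2)"
proof -
  let ?Q = "Pi_pmf B False (\<lambda>_. bernoulli_pmf p)"
  have integrable: "integrable (measure_pmf ?Q) h" for h :: "_ \<Rightarrow> real"
    by (rule integrable_measure_pmf_finite[OF finite_set_Pi_bernoulli[OF assms(1)]])
  have single: "measure_pmf.expectation ?Q (\<lambda>g. of_bool (g e)) = p" if "e \<in> B" for e
    using expectation_Pi_bernoulli_all[of B "{e}" p] that assms by simp
  have pair: "measure_pmf.expectation ?Q (\<lambda>g. of_bool (g e \<and> g f)) = p\<^sup>2"
    if "e \<in> B" "f \<in> adjacent_edges B e" for e f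
  proof -
    have "f \<in> B" "f \<noteq> e" using that unfolding adjacent_edges_def by auto
    thus ?thesis using expectation_Pi_bernoulli_all[of B "{e, f}" p] that assms by (simp add: power2_eq_square)
  qed
  show ?thesis
    by (simp add: integrable single pair Bochner_Integration.integral_sum
        Bochner_Integration.integral_diff cong: sum.cong)
qed

theorem expectation_mu_random_subset_ge:
  fixes D :: nat
  assumes "finite B" "0 \<le> p" "p \<le> 1" "\<And>e. e \<in> B \<Longrightarrow> card (adjacent_edges B e) \<le> D"
  shows "real (card B) * p / (1 + real D * p)
           \<le> measure_pmf.expectation (random_subset B p) (\<lambda>S. real (mu S))"
proof -
  define c where "c = real D * p"
  have c: "0 \<le> c" using assms(2) unfolding c_def by simp
  let ?Q = "Pi_pmf B False (\<lambda>_. bernoulli_pmf p)"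
  let ?tangent = "\<lambda>g. (\<Sum>e\<in>B. (1 + 2 * c) * of_bool (g e)
                      - (\<Sum>f\<in>adjacent_edges B e. of_bool (g e \<and> g f))) / (1 + c)\<^sup>2"
  have "real (card B) * p / (1 + c) = real (card B) * p * (1 + c) / (1 + c)\<^sup>2"
    using c by (simp add: power2_eq_square)
  also have "\<dots> = (\<Sum>e\<in>B. (1 + 2 * c) * p - real D * p\<^sup>2) / (1 + c)\<^sup>2"
    by (simp add: c_def algebra_simps power2_eq_square)
  also have "\<dots> \<le> (\<Sum>e\<in>B. (1 + 2 * c) * p - real (card (adjacent_edges B e)) * p\<^sup>2) / (1 + c)\<^sup>2"
    using assms(4) by (intro divide_right_mono sum_mono diff_left_mono mult_right_mono) auto
  also have "\<dots> = measure_pmf.expectation ?Q ?tangent"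
    by (simp only: integral_divide_zero expectation_sum_adjacent_pairs[OF assms(1-3)])
  also have "\<dots> \<le> measure_pmf.expectation ?Q (\<lambda>g. real (mu {e\<in>B. g e}))"
  proof (intro integral_mono integrable_measure_pmf_finite finite_set_Pi_bernoulli assms(1))
    fix g :: "'a set \<Rightarrow> bool"
    show "?tangent g \<le> real (mu {e\<in>B. g e})"
      unfolding sum_adjacent_edges_Collect[OF assms(1), symmetric]
      using assms(1) c by (intro mu_ge_tangent_sum) auto
  qed
  also have "\<dots> = measure_pmf.expectation (random_subset B p) (\<lambda>S. real (mu S))"
    by (simp add: random_subset_def)
  finally show ?thesis unfolding c_def .
qed

lemma third_le_inverse_degree_ratio:
  fixes p :: real and k :: nat
  assumes "0 < p" "1 \<le> k" "1 < (real k + 1) * p"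
  shows "(1 - 3 * p) / 3 / real k \<le> p / (1 + real (2 * (k - 1)) * p)"
proof -
  have "(1 - 3 * p) * (1 + 2 * (real k - 1) * p) \<le> 3 * real k * p"
  proof -
    have "0 \<le> 3 * p * (2 * (real k - 1) * p)" using assms by simp
    hence "(1 - 3 * p) * (1 + 2 * (real k - 1) * p) \<le> 1 + 2 * (real k - 1) * p - 3 * p"
      by (simp add: algebra_simps)
    also have "\<dots> \<le> 3 * real k * p" using assms by (simp add: algebra_simps)
    finally show ?thesis .
  qed
  moreover have "0 \<le> (real k - 1) * p" using assms by simp
  hence "0 < 1 + 2 * (real k - 1) * p" by linarith
  ultimately show ?thesis using assms by (simp add: of_nat_diff divide_simps mult.commute)
qed

theorem mainTheorem5:
  fixes p :: real and B :: "'a set set"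
  assumes "0 < p" "p < 1"
    and "finite B" "is_edge_set B"
    and "is_b_matching (nat \<lfloor>1 / p\<rfloor>) B"
  shows "measure_pmf.expectation (random_subset B p) (\<lambda>S. real (mu S))
           \<ge> real (card B) / real (nat \<lfloor>1 / p\<rfloor>) * ((1 - 3 * p) / 3)"
proof -
  define k where "k = nat \<lfloor>1 / p\<rfloor>"
  have "1 < 1 / p" using assms(1,2) by simp
  hence "1 \<le> k" "1 / p < real k + 1" unfolding k_def by linarith+
  hence k: "1 \<le> k" "1 < (real k + 1) * p" using assms(1) by (simp_all add: field_simps)
  have degree: "card (adjacent_edges B e) \<le> 2 * (k - 1)" if "e \<in> B" for e
    using card_adjacent_edges_le[OF assms(3) assms(5)[folded k_def] that] assms(4) that
    unfolding is_edge_set_def by blast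
  have "real (card B) / real k * ((1 - 3 * p) / 3) = real (card B) * ((1 - 3 * p) / 3 / real k)"
    by simp
  also have "\<dots> \<le> real (card B) * (p / (1 + real (2 * (k - 1)) * p))"
    using third_le_inverse_degree_ratio[OF assms(1) k] by (intro mult_left_mono) auto
  also have "\<dots> \<le> measure_pmf.expectation (random_subset B p) (\<lambda>S. real (mu S))"
    using expectation_mu_random_subset_ge[OF assms(3) _ _ degree] assms(1,2) by simp
  finally show ?thesis unfolding k_def .
qed

end
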